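(* Fix $\varepsilon>0$ and consider the $q$-stage multistep Frank–Wolfe method (defined in the context) applied to minimizing over $[-1,1]$ the function $f(\mathbf x)=\mathbf x^2/2$ if $|\mathbf x|<\varepsilon$, $\varepsilon\mathbf x-\varepsilon^2/2$ if $\mathbf x\ge\varepsilon$, $-\varepsilon\mathbf x-\varepsilon^2/2$ if $\mathbf x\le-\varepsilon$, with $\mathrm{LMO}(\mathbf x)=-\mathrm{sign}(\mathbf x)$ and $\mathbf x_0=1$. Assume $0<q\mathbf P^{(k)}\beta<1$ entrywise for all $k$. Then there exist a finite $\tilde k$ and a constant $C_2\ge0$ such that $|\mathbf x_k|\le\frac{C_2}{k}$ for all $k>\tilde k$.
   Context: The method has parameters $A\in\mathbb R^{q\times q}$ strictly lower triangular, $\beta\in\mathbb R^q$ with $\sum_i\beta_i=1$, $\omega\in\mathbb R^q$ with $\omega_1=0$, $c>0$; given $\mathbf x_k$ it computes for $i=1,\dots,q$: $\bar{\mathbf x}_i=\mathbf x_k+\sum_jA_{ij}\xi_j$, $\xi_i=\frac{c}{c+k+\omega_i}(\mathrm{LMO}(\bar{\mathbf x}_i)-\bar{\mathbf x}_i)$, and $\mathbf x_{k+1}=\mathbf x_k+\sum_i\beta_i\xi_i$. Here $\Gamma^{(k)}=\mathrm{diag}\big(\frac{c}{c+k+\omega_i}\big)$ and $\mathbf P^{(k)}=\Gamma^{(k)}(I+A^T\Gamma^{(k)})^{-1}$. *)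

theory Defs
  imports "HOL-Analysis.Analysis" "Jordan_Normal_Form.Gauss_Jordan_Elimination"
begin

text \<open>Objective from the paper (documentation only; the method only uses the LMO).\<close>
definition mfw_f :: "real \<Rightarrow> real \<Rightarrow> real" where
  "mfw_f eps x = (if \<bar>x\<bar> < eps then x^2/2
                  else if x \<ge> eps then eps*x - eps^2/2 else -eps*x - eps^2/2)"

definition lmo :: "real \<Rightarrow> real" where
  "lmo x = - sgn x"

text \<open>Stage indices i = 0..q-1 (paper: 1..q). Step size gamma_i^(k) = c/(c+k+omega_i).\<close>
definition gam :: "real \<Rightarrow> real vec \<Rightarrow> nat \<Rightarrow> nat \<Rightarrow> real" where
  "gam c \<omega> k i = c / (c + real k + \<omega> $ i)"

definition Gam :: "nat \<Rightarrow> real \<Rightarrow> real vec \<Rightarrow> nat \<Rightarrow> real mat" where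
  "Gam q c \<omega> k = mat q q (\<lambda>(i,j). if i = j then gam c \<omega> k i else 0)"

definition Pmat :: "nat \<Rightarrow> real mat \<Rightarrow> real \<Rightarrow> real vec \<Rightarrow> nat \<Rightarrow> real mat" where
  "Pmat q A c \<omega> k = Gam q c \<omega> k * the (mat_inverse (one_mat q + transpose_mat A * Gam q c \<omega> k))"

fun mfw_stages :: "real mat \<Rightarrow> real \<Rightarrow> real vec \<Rightarrow> nat \<Rightarrow> real \<Rightarrow> nat \<Rightarrow> real list" where
  "mfw_stages A c \<omega> k x 0 = []"
| "mfw_stages A c \<omega> k x (Suc i) =
     (let l = mfw_stages A c \<omega> k x i;
          xb = x + (\<Sum>j<i. A $$ (i,j) * l ! j)
      in l @ [gam c \<omega> k i * (lmo xb - xb)])"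

definition mfw_step :: "nat \<Rightarrow> real mat \<Rightarrow> real vec \<Rightarrow> real \<Rightarrow> real vec \<Rightarrow> nat \<Rightarrow> real \<Rightarrow> real" where
  "mfw_step q A \<beta> c \<omega> k x = x + (\<Sum>i<q. \<beta> $ i * (mfw_stages A c \<omega> k x q ! i))"

fun mfw_iter :: "nat \<Rightarrow> real mat \<Rightarrow> real vec \<Rightarrow> real \<Rightarrow> real vec \<Rightarrow> nat \<Rightarrow> real" where
  "mfw_iter q A \<beta> c \<omega> 0 = 1"
| "mfw_iter q A \<beta> c \<omega> (Suc k) = mfw_step q A \<beta> c \<omega> k (mfw_iter q A \<beta> c \<omega> k)"

end

theory Submission
  imports Defs "HOL-Real_Asymp.Real_Asymp"
begin

(*
  Let the weights eta^(k) solve the lower-triangular system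
  eta_i = gamma_i (1 - sum_(j<i) A_ij eta_j) and put p_k = sum_i beta_i eta_i, which equals
  1^T P^(k) beta.  Since k gamma_i^(k) -> c, also k eta_i^(k) -> c and k p_k -> c.  While k |x_k|
  exceeds a constant, every intermediate point has the sign of x_k, so the whole step collapses
  to one Frank-Wolfe step x_(k+1) = x_k - p_k (sign x_k + x_k), which either lands within p_k of 0
  or shortens |x| by p_k; while k |x_k| is bounded, all stages are O(1/k).  Hence k |x_k| <= C is
  preserved for a large C, and it is eventually reached, since otherwise |x_k| would drop by at
  least c/(2k) at every step, contradicting the divergence of the harmonic series.
*)

function tri_sol :: "(nat \<Rightarrow> nat \<Rightarrow> real) \<Rightarrow> (nat \<Rightarrow> real) \<Rightarrow> real \<Rightarrow> nat \<Rightarrow> real" where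
  "tri_sol M g a i = g i * (a + (\<Sum>j<i. M i j * tri_sol M g a j))"
  by auto
termination by (relation "Wellfounded.measure (\<lambda>(M, g, a, i). i)") auto

declare tri_sol.simps [simp del]

lemma tri_sol_asymp:
  assumes "\<And>i. ((\<lambda>k. real k * g k i) \<longlongrightarrow> c) sequentially"
  shows "((\<lambda>k. real k * tri_sol M (g k) a i) \<longlongrightarrow> c * a) sequentially"
proof (induction i rule: less_induct)
  case (less i)
  have "((\<lambda>k. tri_sol M (g k) a j) \<longlongrightarrow> 0) sequentially" if "j < i" for j
  proof -
    have "((\<lambda>k. real k * tri_sol M (g k) a j * (1 / real k)) \<longlongrightarrow> c * a * 0) sequentially"
      by (intro tendsto_mult less that lim_1_over_n)
    moreover have "\<forall>\<^sub>F k in sequentially. real k * tri_sol M (g k) a j * (1 / real k) = tri_sol M (g k) a j"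
      using eventually_gt_at_top[of 0] by eventually_elim simp
    ultimately show ?thesis
      by (simp add: tendsto_cong)
  qed
  then have "((\<lambda>k. real k * g k i * (a + (\<Sum>j<i. M i j * tri_sol M (g k) a j)))
               \<longlongrightarrow> c * (a + (\<Sum>j<i. M i j * 0))) sequentially"
    by (intro tendsto_intros assms) auto
  then show ?case
    by (subst tri_sol.simps) (simp add: mult.assoc)
qed

lemma convergent_bounded_above:
  fixes f :: "nat \<Rightarrow> real"
  assumes "convergent f"
  shows "\<exists>M. \<forall>n. f n \<le> M"
  using Bseq_bdd_above[OF convergent_imp_Bseq[OF assms]] by (simp add: bdd_above_def)

lemma no_harmonic_descent:
  fixes Y :: "nat \<Rightarrow> real"
  assumes "0 < c" and nonneg: "\<And>k. 0 \<le> Y k"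
    and descent: "\<And>k. K \<le> k \<Longrightarrow> Y (Suc k) \<le> Y k - c / real k"
  shows False
proof -
  have telescope: "Y (n + K) + c * (\<Sum>i<n. inverse (real (i + K))) \<le> Y K" for n
  proof (induction n)
    case (Suc n)
    have "Y (Suc n + K) \<le> Y (n + K) - c * inverse (real (n + K))"
      using descent[of "n + K"] by (simp add: divide_inverse)
    with Suc show ?case
      by (simp add: algebra_simps)
  qed simp
  have "summable (\<lambda>i. inverse (real (i + K)))"
  proof (rule summableI_nonneg_bounded)
    fix n
    have "c * (\<Sum>i<n. inverse (real (i + K))) \<le> Y K"
      using telescope[of n] nonneg[of "n + K"] by linarith
    then show "(\<Sum>i<n. inverse (real (i + K))) \<le> Y K / c"
      using \<open>0 < c\<close> by (simp add: field_simps)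
  qed simp
  then show False
    using not_summable_harmonic[where 'a = real] summable_iff_shift[of "\<lambda>n. inverse (real n)" K]
    by simp
qed

lemma abs_sign_step_cases:
  fixes x p :: real
  assumes "0 \<le> p" "p \<le> 1"
  shows "\<bar>x - (sgn x + x) * p\<bar> \<le> p \<or> \<bar>x - (sgn x + x) * p\<bar> \<le> \<bar>x\<bar> - p"
proof -
  have px: "0 \<le> p * \<bar>x\<bar>" "p * \<bar>x\<bar> \<le> \<bar>x\<bar>"
    using assms by (auto simp: mult_left_le_one_le)
  consider "x = 0" | "0 < x" | "x < 0"
    by linarith
  then show ?thesis
  proof cases
    case 2
    then have "x - (sgn x + x) * p = x - p * \<bar>x\<bar> - p"
      by (simp add: algebra_simps)
    with 2 px show ?thesis
      by linarith
  next
    case 3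
    then have "x - (sgn x + x) * p = p * \<bar>x\<bar> - \<bar>x\<bar> + p"
      by (simp add: algebra_simps)
    with 3 px show ?thesis
      by linarith
  qed (use assms in simp)
qed

lemma sign_stable_margin:
  fixes k s x R :: real
  assumes "0 \<le> k" "0 \<le> s" "k * s \<le> R" "4 * R \<le> k" "2 * R < k * \<bar>x\<bar>"
  shows "(1 + \<bar>x\<bar>) * s < \<bar>x\<bar>"
proof -
  have "0 \<le> R"
    using assms(1-3) by (meson mult_nonneg_nonneg order_trans)
  with assms(5) have "0 < k"
    using assms(1) by (cases "k = 0") auto
  have "\<bar>x\<bar> * R \<le> \<bar>x\<bar> * (k / 4)"
    using assms(4) by (intro mult_left_mono) auto
  then have xR: "\<bar>x\<bar> * R \<le> k * \<bar>x\<bar> / 4"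
    by (simp add: mult.commute)
  have "k * ((1 + \<bar>x\<bar>) * s) = k * s + \<bar>x\<bar> * (k * s)"
    by (simp add: algebra_simps)
  also have "\<dots> \<le> R + \<bar>x\<bar> * R"
    using assms(3) by (intro add_mono mult_left_mono) auto
  also have "\<dots> < k * \<bar>x\<bar>"
    using xR assms(5) \<open>0 \<le> R\<close> by linarith
  finally show ?thesis
    using \<open>0 < k\<close> by simp
qed

lemma step_size_bounds:
  fixes k p c d :: real
  assumes "0 < c" "1 \<le> k" "d \<le> k" "c \<le> k * p" "k * p \<le> d"
  shows "c / k \<le> p" "0 \<le> p" "p \<le> 1" "(k + 1) * p \<le> 2 * d"
proof -
  show "c / k \<le> p"
    using assms(2,4) by (simp add: pos_divide_le_eq mult.commute)
  moreover have "0 \<le> c / k"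
    using assms(1,2) by simp
  ultimately show p0: "0 \<le> p"
    by linarith
  have "k * p \<le> k * 1"
    using assms(3,5) by simp
  then show "p \<le> 1"
    by (rule mult_left_le_imp_le) (use assms(2) in simp)
  have "(k + 1) * p \<le> 2 * (k * p)"
    using mult_right_mono[OF assms(2) p0] by (simp add: algebra_simps)
  with assms(5) show "(k + 1) * p \<le> 2 * d"
    by linarith
qed

lemma inverse_decay_step:
  fixes k x y p B L C c :: real
  assumes "1 \<le> k" and "C \<le> c * k" and "k * \<bar>x\<bar> \<le> C"
    and "0 \<le> p" and "c \<le> k * p" and "(k + 1) * p \<le> C" and "2 * L \<le> C"
    and small: "k * \<bar>x\<bar> \<le> B \<Longrightarrow> k * \<bar>y\<bar> \<le> L"
    and large: "B < k * \<bar>x\<bar> \<Longrightarrow> \<bar>y\<bar> \<le> p \<or> \<bar>y\<bar> \<le> \<bar>x\<bar> - p"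
  shows "(k + 1) * \<bar>y\<bar> \<le> C"
proof (cases "k * \<bar>x\<bar> \<le> B")
  case True
  have "(k + 1) * \<bar>y\<bar> \<le> 2 * (k * \<bar>y\<bar>)"
    using mult_right_mono[OF \<open>1 \<le> k\<close>, of "\<bar>y\<bar>"] by (simp add: algebra_simps)
  with small[OF True] \<open>2 * L \<le> C\<close> show ?thesis
    by linarith
next
  case False
  with large consider "\<bar>y\<bar> \<le> p" | "\<bar>y\<bar> \<le> \<bar>x\<bar> - p"
    by fastforce
  then show ?thesis
  proof cases
    case 1
    then have "(k + 1) * \<bar>y\<bar> \<le> (k + 1) * p"
      using \<open>1 \<le> k\<close> by (intro mult_left_mono) auto
    with \<open>(k + 1) * p \<le> C\<close> show ?thesis
      by linarith
  next
    case 2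
    have "k * \<bar>x\<bar> \<le> k * c"
      using assms(2,3) by (simp add: mult.commute)
    with \<open>1 \<le> k\<close> have "\<bar>x\<bar> \<le> c"
      using mult_left_le_imp_le by fastforce
    have "(k + 1) * \<bar>y\<bar> \<le> (k + 1) * (\<bar>x\<bar> - p)"
      using 2 \<open>1 \<le> k\<close> by (intro mult_left_mono) auto
    also have "\<dots> = k * \<bar>x\<bar> + \<bar>x\<bar> - k * p - p"
      by (simp add: algebra_simps)
    finally show ?thesis
      using \<open>\<bar>x\<bar> \<le> c\<close> assms(3-5) by linarith
  qed
qed

lemma inverse_bound_entered:
  fixes X p :: "nat \<Rightarrow> real"
  assumes "0 < c"
    and dichotomy: "\<And>k. K \<le> k \<Longrightarrow> C < real k * \<bar>X k\<bar> \<Longrightarrow> \<bar>X (Suc k)\<bar> \<le> p k \<or> \<bar>X (Suc k)\<bar> \<le> \<bar>X k\<bar> - p k"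
    and p_lower: "\<And>k. K \<le> k \<Longrightarrow> c / real k \<le> p k"
    and p_upper: "\<And>k. K \<le> k \<Longrightarrow> (real k + 1) * p k \<le> C"
  shows "\<exists>k1\<ge>K. real k1 * \<bar>X k1\<bar> \<le> C"
proof (rule ccontr)
  assume "\<not> ?thesis"
  then have above: "C < real k * \<bar>X k\<bar>" if "K \<le> k" for k
    using that by (meson not_le)
  have "\<bar>X (Suc k)\<bar> \<le> \<bar>X k\<bar> - c / real k" if "K \<le> k" for k
  proof -
    have "\<not> \<bar>X (Suc k)\<bar> \<le> p k"
    proof
      assume "\<bar>X (Suc k)\<bar> \<le> p k"
      then have "(real k + 1) * \<bar>X (Suc k)\<bar> \<le> (real k + 1) * p k"
        by (intro mult_left_mono) auto
      moreover have "C < (real k + 1) * \<bar>X (Suc k)\<bar>"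
        using above[of "Suc k"] that by (simp add: add.commute)
      ultimately show False
        using p_upper[OF that] by linarith
    qed
    then show ?thesis
      using dichotomy[OF that above[OF that]] p_lower[OF that] by linarith
  qed
  then show False
    using no_harmonic_descent[OF \<open>0 < c\<close>, of "\<lambda>k. \<bar>X k\<bar>" K] by simp
qed

lemma eventually_inverse_bound:
  fixes X p :: "nat \<Rightarrow> real"
  assumes "0 < c" and "B \<le> C" and "2 * L \<le> C" and "2 * d \<le> C"
    and size: "\<And>k. K \<le> k \<Longrightarrow> 1 \<le> real k \<and> d \<le> real k \<and> C \<le> c * real k"
    and small: "\<And>k. K \<le> k \<Longrightarrow> real k * \<bar>X k\<bar> \<le> B \<Longrightarrow> real k * \<bar>X (Suc k)\<bar> \<le> L"
    and large: "\<And>k. K \<le> k \<Longrightarrow> B < real k * \<bar>X k\<bar> \<Longrightarrow> X (Suc k) = X k - (sgn (X k) + X k) * p k"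
    and rate: "\<And>k. K \<le> k \<Longrightarrow> c \<le> real k * p k \<and> real k * p k \<le> d"
  shows "\<exists>k1. \<forall>k\<ge>k1. real k * \<bar>X k\<bar> \<le> C"
proof -
  have bounds: "1 \<le> real k" "d \<le> real k" "C \<le> c * real k" "c \<le> real k * p k" "real k * p k \<le> d"
    if "K \<le> k" for k
    using size[OF that] rate[OF that] by simp_all
  have p: "c / real k \<le> p k" "0 \<le> p k" "p k \<le> 1" "(real k + 1) * p k \<le> C" if "K \<le> k" for k
    using step_size_bounds[OF \<open>0 < c\<close> bounds(1,2,4,5)[OF that]] \<open>2 * d \<le> C\<close> by simp_all
  have dichotomy: "\<bar>X (Suc k)\<bar> \<le> p k \<or> \<bar>X (Suc k)\<bar> \<le> \<bar>X k\<bar> - p k"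
    if "K \<le> k" "B < real k * \<bar>X k\<bar>" for k
    using large[OF that] abs_sign_step_cases[OF p(2,3)[OF that(1)], of "X k"] by simp
  have invariant: "real (Suc k) * \<bar>X (Suc k)\<bar> \<le> C" if "K \<le> k" "real k * \<bar>X k\<bar> \<le> C" for k
  proof -
    have "(real k + 1) * \<bar>X (Suc k)\<bar> \<le> C"
      by (rule inverse_decay_step[OF bounds(1,3)[OF that(1)] that(2) p(2)[OF that(1)] bounds(4)[OF that(1)]
            p(4)[OF that(1)] \<open>2 * L \<le> C\<close> small[OF that(1)] dichotomy[OF that(1)]])
    then show ?thesis
      by (simp add: add.commute)
  qed
  have "\<bar>X (Suc k)\<bar> \<le> p k \<or> \<bar>X (Suc k)\<bar> \<le> \<bar>X k\<bar> - p k"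
    if "K \<le> k" "C < real k * \<bar>X k\<bar>" for k
    using dichotomy that \<open>B \<le> C\<close> by force
  from inverse_bound_entered[OF \<open>0 < c\<close> this p(1,4)]
  obtain k1 where "K \<le> k1" "real k1 * \<bar>X k1\<bar> \<le> C"
    by blast
  have "real k * \<bar>X k\<bar> \<le> C" if "k1 \<le> k" for k
    using that
  proof (induction k rule: dec_induct)
    case (step m)
    with \<open>K \<le> k1\<close> show ?case
      by (intro invariant) simp_all
  qed fact
  then show ?thesis
    by blast
qed

lemma abs_le_const_div_nat:
  fixes X p :: "nat \<Rightarrow> real"
  assumes "0 < c"
    and small: "\<forall>\<^sub>F k in sequentially. real k * \<bar>X k\<bar> \<le> B \<longrightarrow> real k * \<bar>X (Suc k)\<bar> \<le> L"
    and large: "\<forall>\<^sub>F k in sequentially. B < real k * \<bar>X k\<bar> \<longrightarrow> X (Suc k) = X k - (sgn (X k) + X k) * p k"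
    and rate: "\<forall>\<^sub>F k in sequentially. c \<le> real k * p k \<and> real k * p k \<le> d"
  shows "\<exists>k0 C. 0 \<le> C \<and> (\<forall>k>k0. \<bar>X k\<bar> \<le> C / real k)"
proof -
  define C where "C = \<bar>B\<bar> + 2 * \<bar>L\<bar> + 2 * \<bar>d\<bar>"
  have "\<forall>\<^sub>F k in sequentially. max 1 (max d (C / c)) \<le> real k"
    using filterlim_real_sequentially unfolding filterlim_at_top by blast
  then have "\<forall>\<^sub>F k in sequentially. 1 \<le> real k \<and> d \<le> real k \<and> C \<le> c * real k"
    by eventually_elim (use \<open>0 < c\<close> in \<open>simp add: pos_divide_le_eq mult.commute\<close>)
  with small large rate have "\<forall>\<^sub>F k in sequentially.
      (1 \<le> real k \<and> d \<le> real k \<and> C \<le> c * real k) \<and>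
      (real k * \<bar>X k\<bar> \<le> B \<longrightarrow> real k * \<bar>X (Suc k)\<bar> \<le> L) \<and>
      (B < real k * \<bar>X k\<bar> \<longrightarrow> X (Suc k) = X k - (sgn (X k) + X k) * p k) \<and>
      (c \<le> real k * p k \<and> real k * p k \<le> d)"
    by eventually_elim blast
  then obtain K where "\<And>k. K \<le> k \<Longrightarrow>
      (1 \<le> real k \<and> d \<le> real k \<and> C \<le> c * real k) \<and>
      (real k * \<bar>X k\<bar> \<le> B \<longrightarrow> real k * \<bar>X (Suc k)\<bar> \<le> L) \<and>
      (B < real k * \<bar>X k\<bar> \<longrightarrow> X (Suc k) = X k - (sgn (X k) + X k) * p k) \<and>
      (c \<le> real k * p k \<and> real k * p k \<le> d)"
    unfolding eventually_sequentially by blast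
  moreover have "B \<le> C" "2 * L \<le> C" "2 * d \<le> C" "0 \<le> C"
    unfolding C_def by linarith+
  ultimately obtain k1 where "\<And>k. k1 \<le> k \<Longrightarrow> real k * \<bar>X k\<bar> \<le> C"
    using eventually_inverse_bound[OF \<open>0 < c\<close>, of B C L d K X p] by blast
  then have "\<forall>k>k1. \<bar>X k\<bar> \<le> C / real k"
    by (auto simp: pos_le_divide_eq mult.commute)
  with \<open>0 \<le> C\<close> show ?thesis
    by blast
qed

definition mfw_stage :: "real mat \<Rightarrow> real \<Rightarrow> real vec \<Rightarrow> nat \<Rightarrow> real \<Rightarrow> nat \<Rightarrow> real" where
  "mfw_stage A c \<omega> k x i = mfw_stages A c \<omega> k x (Suc i) ! i"

lemma length_mfw_stages [simp]: "length (mfw_stages A c \<omega> k x n) = n"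
  by (induction n) (simp_all add: Let_def)

lemma mfw_stages_nth: "i < n \<Longrightarrow> mfw_stages A c \<omega> k x n ! i = mfw_stage A c \<omega> k x i"
proof (induction n)
  case (Suc n)
  then show ?case
    by (cases "i = n") (simp_all add: mfw_stage_def Let_def nth_append)
qed simp

lemma mfw_stage_rec:
  "mfw_stage A c \<omega> k x i =
     (let xb = x + (\<Sum>j<i. A $$ (i,j) * mfw_stage A c \<omega> k x j) in gam c \<omega> k i * (lmo xb - xb))"
proof -
  have "(\<Sum>j<i. A $$ (i,j) * mfw_stages A c \<omega> k x i ! j) = (\<Sum>j<i. A $$ (i,j) * mfw_stage A c \<omega> k x j)"
    by (intro sum.cong) (simp_all add: mfw_stages_nth)
  then show ?thesis
    by (simp add: mfw_stage_def Let_def nth_append)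
qed

lemma mfw_step_eq: "mfw_step q A \<beta> c \<omega> k x = x + (\<Sum>i<q. \<beta> $ i * mfw_stage A c \<omega> k x i)"
  by (simp add: mfw_step_def mfw_stages_nth)

lemma gam_asymp: "((\<lambda>k. real k * gam c \<omega> k i) \<longlongrightarrow> c) sequentially"
  unfolding gam_def by real_asymp

lemma mfw_stage_abs_le:
  assumes "\<bar>x\<bar> \<le> 1"
  shows "\<bar>mfw_stage A c \<omega> k x i\<bar> \<le> tri_sol (\<lambda>i j. \<bar>A $$ (i,j)\<bar>) (\<lambda>i. \<bar>gam c \<omega> k i\<bar>) 2 i"
proof (induction i rule: less_induct)
  case (less i)
  define \<mu> where "\<mu> = tri_sol (\<lambda>i j. \<bar>A $$ (i,j)\<bar>) (\<lambda>i. \<bar>gam c \<omega> k i\<bar>) 2"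
  define xb where "xb = x + (\<Sum>j<i. A $$ (i,j) * mfw_stage A c \<omega> k x j)"
  have "\<bar>\<Sum>j<i. A $$ (i,j) * mfw_stage A c \<omega> k x j\<bar> \<le> (\<Sum>j<i. \<bar>A $$ (i,j)\<bar> * \<mu> j)"
    by (rule order_trans[OF sum_abs sum_mono])
      (use less in \<open>auto simp: abs_mult \<mu>_def intro: mult_left_mono\<close>)
  moreover have "\<bar>lmo xb\<bar> \<le> 1"
    by (simp add: lmo_def abs_sgn_eq)
  ultimately have "\<bar>lmo xb - xb\<bar> \<le> 2 + (\<Sum>j<i. \<bar>A $$ (i,j)\<bar> * \<mu> j)"
    using assms unfolding xb_def by linarith
  then have "\<bar>gam c \<omega> k i\<bar> * \<bar>lmo xb - xb\<bar> \<le> \<mu> i"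
    unfolding \<mu>_def by (subst tri_sol.simps) (simp add: mult_left_mono flip: \<mu>_def)
  then show ?case
    by (subst mfw_stage_rec) (simp add: abs_mult flip: xb_def \<mu>_def)
qed

definition mfw_weight :: "real mat \<Rightarrow> real \<Rightarrow> real vec \<Rightarrow> nat \<Rightarrow> nat \<Rightarrow> real" where
  "mfw_weight A c \<omega> k = tri_sol (\<lambda>i j. - A $$ (i,j)) (gam c \<omega> k) 1"

definition mfw_step_size :: "nat \<Rightarrow> real mat \<Rightarrow> real vec \<Rightarrow> real \<Rightarrow> real vec \<Rightarrow> nat \<Rightarrow> real" where
  "mfw_step_size q A \<beta> c \<omega> k = (\<Sum>i<q. \<beta> $ i * mfw_weight A c \<omega> k i)"

lemma mfw_stage_sign_stable:
  assumes "\<And>i. i < n \<Longrightarrow> (1 + \<bar>x\<bar>) * \<bar>\<Sum>j<i. A $$ (i,j) * mfw_weight A c \<omega> k j\<bar> < \<bar>x\<bar>"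
  shows "i < n \<Longrightarrow> mfw_stage A c \<omega> k x i = - (sgn x + x) * mfw_weight A c \<omega> k i"
proof (induction i rule: less_induct)
  case (less i)
  define r where "r = (\<Sum>j<i. A $$ (i,j) * mfw_weight A c \<omega> k j)"
  define xb where "xb = x + (\<Sum>j<i. A $$ (i,j) * mfw_stage A c \<omega> k x j)"
  have IH: "mfw_stage A c \<omega> k x j = - (sgn x + x) * mfw_weight A c \<omega> k j" if "j < i" for j
    using less that by simp
  have "(\<Sum>j<i. A $$ (i,j) * mfw_stage A c \<omega> k x j) = - (sgn x + x) * r"
    unfolding r_def sum_distrib_left by (intro sum.cong) (simp_all add: IH)
  then have xb: "xb = x - (sgn x + x) * r"
    by (simp add: xb_def algebra_simps)
  have r: "(1 + \<bar>x\<bar>) * \<bar>r\<bar> < \<bar>x\<bar>"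
    using assms less.prems by (simp add: r_def)
  then have "x \<noteq> 0"
    by (auto simp: not_less)
  then have "\<bar>sgn x + x\<bar> = 1 + \<bar>x\<bar>"
    by (auto simp: sgn_if)
  with r have "\<bar>xb - x\<bar> < \<bar>x\<bar>"
    by (simp add: xb abs_mult)
  then have sgn_xb: "sgn xb = sgn x"
    by (auto simp: sgn_if)
  have "mfw_stage A c \<omega> k x i = gam c \<omega> k i * (lmo xb - xb)"
    by (subst mfw_stage_rec) (simp add: xb_def Let_def)
  also have "\<dots> = - (sgn x + x) * (gam c \<omega> k i * (1 - r))"
    unfolding lmo_def sgn_xb by (simp add: xb algebra_simps)
  also have "gam c \<omega> k i * (1 - r) = mfw_weight A c \<omega> k i"
    unfolding mfw_weight_def r_def by (subst (2) tri_sol.simps) (simp add: sum_negf flip: mfw_weight_def)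
  finally show ?case .
qed

lemma mfw_step_sign_stable:
  assumes "\<And>i. i < q \<Longrightarrow> (1 + \<bar>x\<bar>) * \<bar>\<Sum>j<i. A $$ (i,j) * mfw_weight A c \<omega> k j\<bar> < \<bar>x\<bar>"
  shows "mfw_step q A \<beta> c \<omega> k x = x - (sgn x + x) * mfw_step_size q A \<beta> c \<omega> k"
proof -
  have "mfw_step q A \<beta> c \<omega> k x = x + (\<Sum>i<q. - (sgn x + x) * (\<beta> $ i * mfw_weight A c \<omega> k i))"
    unfolding mfw_step_eq
    by (intro arg_cong2[where f = "(+)"] refl sum.cong) (simp_all add: mfw_stage_sign_stable[OF assms])
  also have "(\<Sum>i<q. - (sgn x + x) * (\<beta> $ i * mfw_weight A c \<omega> k i)) = - (sgn x + x) * mfw_step_size q A \<beta> c \<omega> k"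
    by (simp only: mfw_step_size_def sum_distrib_left)
  finally show ?thesis
    by (simp add: algebra_simps)
qed

lemma mfw_weight_asymp: "((\<lambda>k. real k * mfw_weight A c \<omega> k i) \<longlongrightarrow> c) sequentially"
  using tri_sol_asymp[OF gam_asymp, where M = "\<lambda>i j. - A $$ (i,j)" and a = 1]
  by (simp add: mfw_weight_def)

lemma mfw_step_size_asymp:
  fixes \<beta> :: "real vec"
  assumes "(\<Sum>i<q. \<beta> $ i) = 1"
  shows "((\<lambda>k. real k * mfw_step_size q A \<beta> c \<omega> k) \<longlongrightarrow> c) sequentially"
proof -
  have "((\<lambda>k. \<Sum>i<q. \<beta> $ i * (real k * mfw_weight A c \<omega> k i)) \<longlongrightarrow> (\<Sum>i<q. \<beta> $ i * c)) sequentially"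
    by (intro tendsto_intros mfw_weight_asymp)
  moreover have "(\<Sum>i<q. \<beta> $ i * c) = c"
    using assms by (simp flip: sum_distrib_right)
  moreover have "real k * mfw_step_size q A \<beta> c \<omega> k = (\<Sum>i<q. \<beta> $ i * (real k * mfw_weight A c \<omega> k i))" for k
    by (simp add: mfw_step_size_def sum_distrib_left algebra_simps)
  ultimately show ?thesis
    by simp
qed

lemma eventually_mfw_step_sign_stable:
  obtains B where "\<forall>\<^sub>F k in sequentially. \<forall>x. B < real k * \<bar>x\<bar> \<longrightarrow>
                     mfw_step q A \<beta> c \<omega> k x = x - (sgn x + x) * mfw_step_size q A \<beta> c \<omega> k"
proof -
  define res where "res k i = \<bar>\<Sum>j<i. A $$ (i,j) * (real k * mfw_weight A c \<omega> k j)\<bar>" for k i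
  have res: "res k i = real k * \<bar>\<Sum>j<i. A $$ (i,j) * mfw_weight A c \<omega> k j\<bar>" for k i
  proof -
    have "(\<Sum>j<i. A $$ (i,j) * (real k * mfw_weight A c \<omega> k j)) = real k * (\<Sum>j<i. A $$ (i,j) * mfw_weight A c \<omega> k j)"
      by (simp add: sum_distrib_left algebra_simps)
    then show ?thesis
      by (simp add: res_def abs_mult)
  qed
  have "((\<lambda>k. \<Sum>i<q. res k i) \<longlongrightarrow> (\<Sum>i<q. \<bar>\<Sum>j<i. A $$ (i,j) * c\<bar>)) sequentially"
    unfolding res_def by (intro tendsto_intros mfw_weight_asymp)
  then obtain R where R: "\<And>k. (\<Sum>i<q. res k i) \<le> R"
    using convergent_bounded_above[OF convergentI] by blast
  have "\<forall>\<^sub>F k in sequentially. 4 * R \<le> real k"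
    using filterlim_real_sequentially unfolding filterlim_at_top by blast
  then have "\<forall>\<^sub>F k in sequentially. \<forall>x. 2 * R < real k * \<bar>x\<bar> \<longrightarrow>
               mfw_step q A \<beta> c \<omega> k x = x - (sgn x + x) * mfw_step_size q A \<beta> c \<omega> k"
  proof eventually_elim
    case (elim k)
    show ?case
    proof (intro allI impI mfw_step_sign_stable)
      fix x i
      assume "2 * R < real k * \<bar>x\<bar>" and "i < q"
      have "res k i \<le> (\<Sum>i<q. res k i)"
        using \<open>i < q\<close> by (intro member_le_sum) (auto simp: res_def)
      with R[of k] have "real k * \<bar>\<Sum>j<i. A $$ (i,j) * mfw_weight A c \<omega> k j\<bar> \<le> R"
        unfolding res by linarith
      with elim \<open>2 * R < real k * \<bar>x\<bar>\<close>
      show "(1 + \<bar>x\<bar>) * \<bar>\<Sum>j<i. A $$ (i,j) * mfw_weight A c \<omega> k j\<bar> < \<bar>x\<bar>"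
        by (intro sign_stable_margin) auto
    qed
  qed
  then show thesis
    by (rule that)
qed

lemma eventually_mfw_step_small:
  obtains L where "\<forall>\<^sub>F k in sequentially. \<forall>x. real k * \<bar>x\<bar> \<le> B \<longrightarrow>
                     real k * \<bar>mfw_step q A \<beta> c \<omega> k x\<bar> \<le> L"
proof -
  define \<mu> where "\<mu> k = tri_sol (\<lambda>i j. \<bar>A $$ (i,j)\<bar>) (\<lambda>i. \<bar>gam c \<omega> k i\<bar>) 2" for k
  have "((\<lambda>k. real k * \<bar>gam c \<omega> k i\<bar>) \<longlongrightarrow> \<bar>c\<bar>) sequentially" for i
    using tendsto_rabs[OF gam_asymp] by (simp add: abs_mult)
  then have "((\<lambda>k. \<Sum>i<q. \<bar>\<beta> $ i\<bar> * (real k * \<mu> k i)) \<longlongrightarrow> (\<Sum>i<q. \<bar>\<beta> $ i\<bar> * (\<bar>c\<bar> * 2))) sequentially"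
    unfolding \<mu>_def by (intro tendsto_intros tri_sol_asymp)
  then obtain M where M: "\<And>k. (\<Sum>i<q. \<bar>\<beta> $ i\<bar> * (real k * \<mu> k i)) \<le> M"
    using convergent_bounded_above[OF convergentI] by blast
  have "\<forall>\<^sub>F k in sequentially. max 1 B \<le> real k"
    using filterlim_real_sequentially unfolding filterlim_at_top by blast
  then have "\<forall>\<^sub>F k in sequentially. \<forall>x. real k * \<bar>x\<bar> \<le> B \<longrightarrow>
               real k * \<bar>mfw_step q A \<beta> c \<omega> k x\<bar> \<le> B + M"
  proof eventually_elim
    case (elim k)
    show ?case
    proof (intro allI impI)
      fix x
      assume x: "real k * \<bar>x\<bar> \<le> B"
      have k: "B \<le> real k" "0 < real k"
        using elim by auto
      with x have "real k * \<bar>x\<bar> \<le> real k * 1"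
        by linarith
      with k have "\<bar>x\<bar> \<le> 1"
        using mult_left_le_imp_le by blast
      then have "\<bar>\<beta> $ i * mfw_stage A c \<omega> k x i\<bar> \<le> \<bar>\<beta> $ i\<bar> * \<mu> k i" for i
        unfolding abs_mult \<mu>_def by (intro mult_left_mono mfw_stage_abs_le) auto
      then have "\<bar>\<Sum>i<q. \<beta> $ i * mfw_stage A c \<omega> k x i\<bar> \<le> (\<Sum>i<q. \<bar>\<beta> $ i\<bar> * \<mu> k i)"
        by (intro order_trans[OF sum_abs sum_mono])
      then have "real k * \<bar>mfw_step q A \<beta> c \<omega> k x\<bar> \<le> real k * (\<bar>x\<bar> + (\<Sum>i<q. \<bar>\<beta> $ i\<bar> * \<mu> k i))"
        unfolding mfw_step_eq by (intro mult_left_mono) auto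
      also have "\<dots> = real k * \<bar>x\<bar> + (\<Sum>i<q. \<bar>\<beta> $ i\<bar> * (real k * \<mu> k i))"
        by (simp add: algebra_simps sum_distrib_left)
      also have "\<dots> \<le> B + M"
        using x M[of k] by linarith
      finally show "real k * \<bar>mfw_step q A \<beta> c \<omega> k x\<bar> \<le> B + M" .
    qed
  qed
  then show thesis
    by (rule that)
qed

theorem lemma3:
  fixes q :: nat and A :: "real mat" and \<beta> \<omega> :: "real vec" and c :: real
  assumes "q \<ge> 1"
    and "A \<in> carrier_mat q q"
    and "\<forall>i<q. \<forall>j<q. i \<le> j \<longrightarrow> A $$ (i,j) = 0"
    and "dim_vec \<beta> = q" and "(\<Sum>i<q. \<beta> $ i) = 1"
    and "dim_vec \<omega> = q" and "\<omega> $ 0 = 0"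
    and "c > 0"
    and "\<forall>k. \<forall>i<q. 0 < (real q \<cdot>\<^sub>v (Pmat q A c \<omega> k *\<^sub>v \<beta>)) $ i
                    \<and> (real q \<cdot>\<^sub>v (Pmat q A c \<omega> k *\<^sub>v \<beta>)) $ i < 1"
  shows "\<exists>k0 C2. C2 \<ge> 0 \<and> (\<forall>k>k0. \<bar>mfw_iter q A \<beta> c \<omega> k\<bar> \<le> C2 / real k)"
proof -
  define X where "X = mfw_iter q A \<beta> c \<omega>"
  define p where "p = mfw_step_size q A \<beta> c \<omega>"
  obtain B where large: "\<forall>\<^sub>F k in sequentially. \<forall>x. B < real k * \<bar>x\<bar> \<longrightarrow>
                           mfw_step q A \<beta> c \<omega> k x = x - (sgn x + x) * p k"
    unfolding p_def by (rule eventually_mfw_step_sign_stable)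
  obtain L where small: "\<forall>\<^sub>F k in sequentially. \<forall>x. real k * \<bar>x\<bar> \<le> B \<longrightarrow>
                           real k * \<bar>mfw_step q A \<beta> c \<omega> k x\<bar> \<le> L"
    by (rule eventually_mfw_step_small)
  have rate: "((\<lambda>k. real k * p k) \<longlongrightarrow> c) sequentially"
    unfolding p_def using mfw_step_size_asymp[OF \<open>(\<Sum>i<q. \<beta> $ i) = 1\<close>] .
  have "\<forall>\<^sub>F k in sequentially. c / 2 < real k * p k" "\<forall>\<^sub>F k in sequentially. real k * p k < 2 * c"
    using order_tendstoD(1)[OF rate, of "c / 2"] order_tendstoD(2)[OF rate, of "2 * c"] \<open>c > 0\<close>
    by simp_all
  then have "\<forall>\<^sub>F k in sequentially. c / 2 \<le> real k * p k \<and> real k * p k \<le> 2 * c"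
    by eventually_elim simp
  moreover have "\<forall>\<^sub>F k in sequentially. real k * \<bar>X k\<bar> \<le> B \<longrightarrow> real k * \<bar>X (Suc k)\<bar> \<le> L"
    using small by eventually_elim (simp add: X_def)
  moreover have "\<forall>\<^sub>F k in sequentially. B < real k * \<bar>X k\<bar> \<longrightarrow> X (Suc k) = X k - (sgn (X k) + X k) * p k"
    using large by eventually_elim (simp add: X_def)
  ultimately show ?thesis
    unfolding X_def using abs_le_const_div_nat[of "c / 2"] \<open>c > 0\<close> by simp
qed

end
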